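(* In the setting of the context (with $V$ bounded on bounded sets), there exist constants $\varepsilon>0$ and $C>0$ such that for all $x\neq y$ in $\mathbb{R}^d$, $$\mathbb{E}[e^{\varepsilon\tau_{x,y}}]\le C(1+V(x)+V(y)).$$
   Context: $X$ is an adapted càdlàg strong Markov process on $\mathbb{R}^d$ with semigroup $(P_t)$ satisfying: (LC) measurable $V:\mathbb{R}^d\to[1,\infty)$, $V(x)\to\infty$ as $|x|\to\infty$, $t_*>0$, $\alpha\in(0,1)$, $\beta\ge0$ with $P_{t_*}V\le\alpha V+\beta$; (H1) for any $R,\delta>0$ there exist $R_0(R)>0$ and $T_0(R,\delta)$ such that for $t\ge T_0$ and $|x|,|y|\le R$, some coupling $\pi$ of $P_t(x,\cdot),P_t(y,\cdot)$ gives positive mass to $\{(x',y'):|x'-y'|\le\delta,|x'|,|y'|\le R_0\}$; (H2) $\lim_{y\to x}\sup_{\|f\|_\infty\le1}[P_tf(x)-P_tf(y)]=0$ for all $t>0,x$. $\|\mu\|_{var}=\sup_{\Gamma}|\mu(\Gamma)|$. Construction: $R_*>0$ is such that for some $\alpha_*\in(0,1)$, $\beta_*>0$ and all $k\in\mathbb{N}$, $\mathbb{E}[V(X_{kt_*}(x))+V(X_{kt_*}(y))]\le\alpha_*(V(x)+V(y))$ if $\sqrt{|x|^2+|y|^2}\ge R_*$ and $\le\beta_*$ otherwise. $T_0>1$ is such that $\sup_{|x|,|y|\le R_*}\|P_t(x,\cdot)-P_t(y,\cdot)\|_{var}<1$ for $t>T_0$; $T=k_0t_*$, $k_0=[\frac{T_0+1}{t_*}+1]$.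 $P_{x,y}$ is a maximal coupling of $P_T(x,\cdot),P_T(y,\cdot)$ (marginals these, and $P_{x,y}\{u\neq v\}=\|P_T(x,\cdot)-P_T(y,\cdot)\|_{var}$), measurable in $(x,y)$. $(S(k))=(S^x(k),S^y(k))$ is the Markov chain on $\mathbb{R}^d\times\mathbb{R}^d$ started at $(x,y)$ with transition probabilities $P_{x,y}$, and $\tau_{x,y}=\inf\{m\ge0:S^x(m)=S^y(m)\}$. *)

theory Defs
  imports "HOL-Probability.Probability"
begin

definition var_dist :: "'a measure \<Rightarrow> 'a measure \<Rightarrow> real" where
  "var_dist M N = (SUP A \<in> sets M. \<bar>measure M A - measure N A\<bar>)"

definition is_coupling :: "('a::topological_space \<times> 'a) measure \<Rightarrow> 'a measure \<Rightarrow> 'a measure \<Rightarrow> bool" where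
  "is_coupling \<pi> M N \<longleftrightarrow> \<pi> \<in> space (prob_algebra borel) \<and>
     distr \<pi> borel fst = M \<and> distr \<pi> borel snd = N"

definition markov_chain_from ::
  "'w measure \<Rightarrow> ('w \<Rightarrow> nat \<Rightarrow> 's) \<Rightarrow> 's measure \<Rightarrow> ('s \<Rightarrow> 's measure) \<Rightarrow> 's \<Rightarrow> bool" where
  "markov_chain_from Om S N K s0 \<longleftrightarrow>
     prob_space Om \<and>
     (\<forall>n. (\<lambda>w. S w n) \<in> measurable Om N) \<and>
     (\<forall>w\<in>space Om. S w 0 = s0) \<and>
     (\<forall>n. distr Om (PiM {..Suc n} (\<lambda>_. N)) (\<lambda>w. restrict (S w) {..Suc n}) =
          bind (distr Om (PiM {..n} (\<lambda>_. N)) (\<lambda>w. restrict (S w) {..n}))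
            (\<lambda>p. distr (K (p n)) (PiM {..Suc n} (\<lambda>_. N))
                    (\<lambda>z. restrict (p(Suc n := z)) {..Suc n})))"

definition coupling_time :: "(nat \<Rightarrow> 'a \<times> 'a) \<Rightarrow> enat" where
  "coupling_time s = (if \<exists>m. fst (s m) = snd (s m)
     then enat (LEAST m. fst (s m) = snd (s m)) else \<infinity>)"

definition exp_enat :: "real \<Rightarrow> enat \<Rightarrow> ennreal" where
  "exp_enat e t = (case t of enat n \<Rightarrow> ennreal (exp (e * real n)) | \<infinity> \<Rightarrow> \<infinity>)"

end

theory Submission
  imports Defs
begin

text \<open>
  Let \<open>h (x, y) = V x + V y + b\<close>. As long as the two components of the coupled chain have not
  met, one step of the kernel \<open>Q\<close> contracts \<open>h\<close> by a factor \<open>\<theta> < 1\<close>: away from the ball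
  of radius \<open>R_star\<close> because of the drift of \<open>V\<close>, and inside it because there \<open>Q\<close> couples
  with probability at least \<open>1 - c\<close>, which pays for the constant \<open>b\<close>. Iterating with the
  Markov property gives \<open>E[h(S n); \<tau> > n] \<le> \<theta>^n h(x, y)\<close>, and as \<open>h \<ge> 1\<close> this bounds
  \<open>P(\<tau> > n)\<close>; summing against \<open>exp (\<epsilon> (n + 1))\<close> with \<open>\<epsilon> = -ln \<theta> / 2\<close> gives the
  exponential moment.
\<close>

definition survival_weight :: "'s set \<Rightarrow> ('s \<Rightarrow> ennreal) \<Rightarrow> nat \<Rightarrow> (nat \<Rightarrow> 's) \<Rightarrow> ennreal" where
  "survival_weight D h n p = (\<Prod>k\<le>n. indicator D (p k)) * h (p n)"

lemma survival_weight_restrict [simp]: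
  "survival_weight D h n (restrict p {..n}) = survival_weight D h n p"
  unfolding survival_weight_def by (auto intro!: prod.cong)

lemma survival_weight_Suc:
  "survival_weight D h (Suc n) p =
     (\<Prod>k\<le>n. indicator D (p k)) * (indicator D (p (Suc n)) * h (p (Suc n)))"
  unfolding survival_weight_def by (simp add: atMost_Suc mult_ac)

lemma measurable_survival_weight [measurable]:
  assumes [measurable]: "D \<in> sets N" "h \<in> borel_measurable N"
  shows "survival_weight D h n \<in> borel_measurable (PiM {..n} (\<lambda>_. N))"
  unfolding survival_weight_def by measurable

lemma measurable_extend_path:
  "(\<lambda>(p, z). restrict (p(Suc n := z)) {..Suc n})
     \<in> PiM {..n} (\<lambda>_. N) \<Otimes>\<^sub>M N \<rightarrow>\<^sub>M PiM {..Suc n} (\<lambda>_. N)"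
proof -
  have "(\<lambda>x. \<lambda>i\<in>{..Suc n}. if i = Suc n then snd x else fst x i)
      \<in> PiM {..n} (\<lambda>_. N) \<Otimes>\<^sub>M N \<rightarrow>\<^sub>M PiM {..Suc n} (\<lambda>_. N)"
  proof (rule measurable_restrict)
    fix i assume "i \<in> {..Suc n}"
    then show "(\<lambda>x. if i = Suc n then snd x else fst x i) \<in> PiM {..n} (\<lambda>_. N) \<Otimes>\<^sub>M N \<rightarrow>\<^sub>M N"
      by (cases "i = Suc n")
        (simp_all add: measurable_compose[OF measurable_fst measurable_component_singleton])
  qed
  then show ?thesis
    by (rule measurable_cong[THEN iffD1, rotated]) (auto simp: restrict_def)
qed

lemma nn_integral_survival_weight_step:
  assumes K: "K \<in> N \<rightarrow>\<^sub>M subprob_algebra N"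
    and [measurable]: "D \<in> sets N" "h \<in> borel_measurable N"
    and drift: "\<And>s. s \<in> space N \<Longrightarrow> (\<integral>\<^sup>+ z. indicator D z * h z \<partial>K s) \<le> \<theta> * h s"
    and p: "p \<in> space (PiM {..n} (\<lambda>_. N))"
  shows "(\<integral>\<^sup>+ q. survival_weight D h (Suc n) q
            \<partial>distr (K (p n)) (PiM {..Suc n} (\<lambda>_. N)) (\<lambda>z. restrict (p(Suc n := z)) {..Suc n}))
         \<le> \<theta> * survival_weight D h n p"
proof -
  have pn: "p n \<in> space N" using p by (auto simp: space_PiM)
  have sets_K: "sets (K (p n)) = sets N" by (rule sets_kernel[OF K pn])
  have "(\<lambda>z. restrict (p(Suc n := z)) {..Suc n}) \<in> N \<rightarrow>\<^sub>M PiM {..Suc n} (\<lambda>_. N)"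
    using measurable_comp[OF measurable_Pair1'[OF p] measurable_extend_path] by (simp add: comp_def)
  then have extend: "(\<lambda>z. restrict (p(Suc n := z)) {..Suc n}) \<in> K (p n) \<rightarrow>\<^sub>M PiM {..Suc n} (\<lambda>_. N)"
    by (subst measurable_cong_sets[OF sets_K refl])
  have killed_h: "(\<lambda>z. indicator D z * h z) \<in> borel_measurable (K (p n))"
    by (subst measurable_cong_sets[OF sets_K refl]) simp
  have "(\<integral>\<^sup>+ q. survival_weight D h (Suc n) q
            \<partial>distr (K (p n)) (PiM {..Suc n} (\<lambda>_. N)) (\<lambda>z. restrict (p(Suc n := z)) {..Suc n}))
      = (\<integral>\<^sup>+ z. (\<Prod>k\<le>n. indicator D (p k)) * (indicator D z * h z) \<partial>K (p n))"
    by (simp add: nn_integral_distr[OF extend] survival_weight_Suc)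
  also have "\<dots> = (\<Prod>k\<le>n. indicator D (p k)) * (\<integral>\<^sup>+ z. indicator D z * h z \<partial>K (p n))"
    by (rule nn_integral_cmult[OF killed_h])
  also have "\<dots> \<le> (\<Prod>k\<le>n. indicator D (p k)) * (\<theta> * h (p n))"
    by (rule mult_left_mono[OF drift[OF pn]]) simp
  finally show ?thesis by (simp add: survival_weight_def mult_ac)
qed

lemma markov_chain_survival_weight_le:
  fixes Om :: "'w measure" and S :: "'w \<Rightarrow> nat \<Rightarrow> 's" and h :: "'s \<Rightarrow> ennreal"
  assumes mc: "markov_chain_from Om S N K s0"
    and K: "K \<in> N \<rightarrow>\<^sub>M subprob_algebra N"
    and [measurable]: "D \<in> sets N" "h \<in> borel_measurable N"
    and drift: "\<And>s. s \<in> space N \<Longrightarrow> (\<integral>\<^sup>+ z. indicator D z * h z \<partial>K s) \<le> \<theta> * h s"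
  shows "(\<integral>\<^sup>+ w. survival_weight D h n (S w) \<partial>Om) \<le> \<theta> ^ n * h s0"
proof -
  have prob: "prob_space Om" and start: "\<And>w. w \<in> space Om \<Longrightarrow> S w 0 = s0"
    and [measurable]: "\<And>n. (\<lambda>w. S w n) \<in> Om \<rightarrow>\<^sub>M N"
    and law_Suc: "\<And>n. distr Om (PiM {..Suc n} (\<lambda>_. N)) (\<lambda>w. restrict (S w) {..Suc n}) =
          distr Om (PiM {..n} (\<lambda>_. N)) (\<lambda>w. restrict (S w) {..n}) \<bind>
            (\<lambda>p. distr (K (p n)) (PiM {..Suc n} (\<lambda>_. N)) (\<lambda>z. restrict (p(Suc n := z)) {..Suc n}))"
    using mc unfolding markov_chain_from_def by auto
  let ?law = "\<lambda>n. distr Om (PiM {..n} (\<lambda>_. N)) (\<lambda>w. restrict (S w) {..n})"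
  have path_meas: "(\<lambda>w. restrict (S w) {..n}) \<in> Om \<rightarrow>\<^sub>M PiM {..n} (\<lambda>_. N)" for n
    by (rule measurable_restrict) simp
  have by_law: "(\<integral>\<^sup>+ w. survival_weight D h n (S w) \<partial>Om) = (\<integral>\<^sup>+ p. survival_weight D h n p \<partial>?law n)" for n
    by (simp add: nn_integral_distr[OF path_meas])
  show ?thesis
  proof (induction n)
    case 0
    have "(\<integral>\<^sup>+ w. survival_weight D h 0 (S w) \<partial>Om) = (\<integral>\<^sup>+ w. indicator D s0 * h s0 \<partial>Om)"
      by (rule nn_integral_cong) (simp add: survival_weight_def start)
    also have "\<dots> = indicator D s0 * h s0"
      using prob_space.emeasure_space_1[OF prob] by simp
    also have "\<dots> \<le> h s0" by (simp add: indicator_def)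
    finally show ?case by simp
  next
    case (Suc n)
    have step_kernel: "(\<lambda>p. distr (K (p n)) (PiM {..Suc n} (\<lambda>_. N)) (\<lambda>z. restrict (p(Suc n := z)) {..Suc n}))
        \<in> ?law n \<rightarrow>\<^sub>M subprob_algebra (PiM {..Suc n} (\<lambda>_. N))"
      by (subst measurable_cong_sets[OF sets_distr refl],
          rule measurable_distr2[OF measurable_extend_path measurable_compose[OF _ K]]) simp
    have "(\<integral>\<^sup>+ w. survival_weight D h (Suc n) (S w) \<partial>Om)
        = (\<integral>\<^sup>+ p. (\<integral>\<^sup>+ q. survival_weight D h (Suc n) q
             \<partial>distr (K (p n)) (PiM {..Suc n} (\<lambda>_. N)) (\<lambda>z. restrict (p(Suc n := z)) {..Suc n})) \<partial>?law n)"
      by (simp add: by_law law_Suc nn_integral_bind[OF _ step_kernel])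
    also have "\<dots> \<le> (\<integral>\<^sup>+ p. \<theta> * survival_weight D h n p \<partial>?law n)"
      by (rule nn_integral_mono) (auto intro: nn_integral_survival_weight_step[OF K _ _ drift])
    also have "\<dots> = \<theta> * (\<integral>\<^sup>+ w. survival_weight D h n (S w) \<partial>Om)"
      by (simp add: by_law nn_integral_cmult)
    also have "\<dots> \<le> \<theta> * (\<theta> ^ n * h s0)"
      using Suc.IH by (rule mult_left_mono) simp
    finally show ?case by (simp add: mult_ac)
  qed
qed

lemma exp_enat_coupling_time_le:
  fixes s :: "nat \<Rightarrow> 'a \<times> 'a" and g :: "nat \<Rightarrow> ennreal"
  assumes "0 \<le> \<epsilon>" and g: "\<And>n. \<forall>k\<le>n. fst (s k) \<noteq> snd (s k) \<Longrightarrow> 1 \<le> g n"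
  shows "exp_enat \<epsilon> (coupling_time s) \<le> 1 + (\<Sum>n. ennreal (exp (\<epsilon> * Suc n)) * g n)"
proof (cases "\<exists>m. fst (s m) = snd (s m)")
  case True
  define m where "m = (LEAST m. fst (s m) = snd (s m))"
  have time: "coupling_time s = enat m" unfolding coupling_time_def m_def using True by simp
  have uncoupled: "fst (s k) \<noteq> snd (s k)" if "k < m" for k
    using not_less_Least[OF that[unfolded m_def]] .
  show ?thesis
  proof (cases m)
    case 0
    then show ?thesis by (simp add: time exp_enat_def)
  next
    case (Suc j)
    have "exp_enat \<epsilon> (coupling_time s) = ennreal (exp (\<epsilon> * Suc j))"
      by (simp add: time exp_enat_def Suc)
    also have "\<dots> \<le> ennreal (exp (\<epsilon> * Suc j)) * g j"
      using mult_left_mono[OF g, of j "ennreal (exp (\<epsilon> * Suc j))"] uncoupled Suc by auto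
    also have "\<dots> \<le> (\<Sum>n. ennreal (exp (\<epsilon> * Suc n)) * g n)"
      using sum_le_suminf[of "\<lambda>n. ennreal (exp (\<epsilon> * Suc n)) * g n" "{j}"] by simp
    finally show ?thesis by (simp add: add_increasing)
  qed
next
  case False
  have "(\<Sum>n::nat. ennreal 1) = \<top>"
  proof (rule summable_iff_suminf_neq_top)
    show "\<not> summable (\<lambda>n::nat. 1::real)"
      using summable_LIMSEQ_zero[of "\<lambda>n::nat. 1::real"] LIMSEQ_const_iff[of "1::real" 0] by auto
  qed simp
  moreover have "(\<Sum>n::nat. ennreal 1) \<le> (\<Sum>n. ennreal (exp (\<epsilon> * Suc n)) * g n)"
  proof (rule suminf_le)
    fix n
    have "ennreal 1 \<le> ennreal (exp (\<epsilon> * Suc n))" using \<open>0 \<le> \<epsilon>\<close> by simp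
    also have "\<dots> \<le> ennreal (exp (\<epsilon> * Suc n)) * g n"
      using mult_left_mono[OF g, of n "ennreal (exp (\<epsilon> * Suc n))"] False by auto
    finally show "ennreal 1 \<le> ennreal (exp (\<epsilon> * Suc n)) * g n" .
  qed auto
  ultimately show ?thesis by (simp add: top_unique)
qed

lemma sets_borel_off_diagonal [measurable]:
  "{(u, v). u \<noteq> v} \<in> sets (borel :: ('a::t2_space \<times> 'a) measure)"
proof -
  have "{(u, v). u \<noteq> v} = - {y :: 'a \<times> 'a. \<exists>x. y = (x, x)}" by auto
  then show ?thesis by (simp only:) (intro borel_open open_Compl closed_diagonal)
qed

lemma exp_neg_half_ln_mult_power:
  assumes "0 < \<theta>"
  shows "exp (- ln \<theta> / 2 * Suc n) * \<theta> ^ n = sqrt \<theta> ^ n / sqrt \<theta>"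
proof -
  have "exp (- ln \<theta> / 2) = 1 / sqrt \<theta>"
    using assms by (simp add: ln_sqrt[symmetric] exp_minus inverse_eq_divide)
  then have "exp (- ln \<theta> / 2 * Suc n) = (1 / sqrt \<theta>) ^ Suc n"
    by (metis exp_of_nat_mult mult.commute)
  moreover have "\<theta> ^ n = sqrt \<theta> ^ n * sqrt \<theta> ^ n"
    using assms by (simp flip: power_mult_distrib)
  ultimately show ?thesis using assms by (simp add: field_simps)
qed

lemma markov_chain_coupling_time_exp_moment:
  fixes Q :: "'a::t2_space \<times> 'a \<Rightarrow> ('a \<times> 'a) measure" and h :: "'a \<times> 'a \<Rightarrow> ennreal"
  assumes mc: "markov_chain_from Om S borel Q s0"
    and Q: "Q \<in> borel \<rightarrow>\<^sub>M subprob_algebra borel"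
    and h [measurable]: "h \<in> borel_measurable borel" and h_ge1: "\<And>s. 1 \<le> h s"
    and \<theta>: "0 < \<theta>" "\<theta> < 1"
    and drift: "\<And>s. (\<integral>\<^sup>+ z. indicator {(u, v). u \<noteq> v} z * h z \<partial>Q s) \<le> ennreal \<theta> * h s"
  shows "(\<integral>\<^sup>+ w. exp_enat (- ln \<theta> / 2) (coupling_time (S w)) \<partial>Om)
           \<le> 1 + ennreal (1 / (sqrt \<theta> * (1 - sqrt \<theta>))) * h s0"
proof -
  define D where "D = {(u, v). u \<noteq> (v :: 'a)}"
  \<comment> \<open>half the decay rate of \<open>\<theta>^n\<close>, so that \<open>exp (\<epsilon> (n + 1)) \<theta>^n = \<surd>\<theta>^(n - 1)\<close> stays summable\<close>
  define \<epsilon> where "\<epsilon> = - ln \<theta> / 2"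
  define e where "e n = ennreal (exp (\<epsilon> * Suc n))" for n
  define F where "F n w = survival_weight D h n (S w)" for n w
  have [measurable]: "(\<lambda>w. S w n) \<in> Om \<rightarrow>\<^sub>M borel" for n
    using mc unfolding markov_chain_from_def by auto
  have F_meas: "F n \<in> borel_measurable Om" for n
    unfolding F_def D_def survival_weight_def by measurable
  have F_decay: "(\<integral>\<^sup>+ w. F n w \<partial>Om) \<le> ennreal \<theta> ^ n * h s0" for n
    unfolding F_def D_def using drift by (intro markov_chain_survival_weight_le[OF mc Q]) auto
  have pointwise: "exp_enat \<epsilon> (coupling_time (S w)) \<le> 1 + (\<Sum>n. e n * F n w)" for w
    unfolding e_def
  proof (rule exp_enat_coupling_time_le)
    show "0 \<le> \<epsilon>" using \<theta> by (simp add: \<epsilon>_def)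
    fix n assume "\<forall>k\<le>n. fst (S w k) \<noteq> snd (S w k)"
    then have "(\<Prod>k\<le>n. indicator D (S w k) :: ennreal) = 1"
      unfolding D_def by (intro prod.neutral) (auto simp: indicator_def split: prod.splits)
    then show "1 \<le> F n w" by (simp add: F_def survival_weight_def h_ge1)
  qed
  have summand: "e n * ennreal \<theta> ^ n = ennreal (sqrt \<theta> ^ n / sqrt \<theta>)" for n
    using \<theta> exp_neg_half_ln_mult_power[OF \<theta>(1), of n]
    by (simp add: e_def \<epsilon>_def ennreal_power ennreal_mult[symmetric])
  have "(\<lambda>n. sqrt \<theta> ^ n / sqrt \<theta>) sums (1 / (sqrt \<theta> * (1 - sqrt \<theta>)))"
    using \<theta> sums_divide[OF geometric_sums, of "sqrt \<theta>" "sqrt \<theta>"] by (simp add: mult.commute)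
  then have geometric: "(\<Sum>n. e n * ennreal \<theta> ^ n) = ennreal (1 / (sqrt \<theta> * (1 - sqrt \<theta>)))"
    unfolding summand using \<theta> by (intro sums_unique[symmetric]) simp
  have "(\<integral>\<^sup>+ w. exp_enat \<epsilon> (coupling_time (S w)) \<partial>Om) \<le> (\<integral>\<^sup>+ w. 1 + (\<Sum>n. e n * F n w) \<partial>Om)"
    by (intro nn_integral_mono pointwise)
  also have "\<dots> = (\<integral>\<^sup>+ w. 1 \<partial>Om) + (\<integral>\<^sup>+ w. (\<Sum>n. e n * F n w) \<partial>Om)"
    using F_meas by (intro nn_integral_add) auto
  also have "(\<integral>\<^sup>+ w. (\<Sum>n. e n * F n w) \<partial>Om) = (\<Sum>n. e n * \<integral>\<^sup>+ w. F n w \<partial>Om)"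
    using F_meas by (simp add: nn_integral_suminf nn_integral_cmult)
  also have "(\<integral>\<^sup>+ w. 1 \<partial>Om) = 1"
    using mc prob_space.emeasure_space_1 unfolding markov_chain_from_def by auto
  also have "(\<Sum>n. e n * \<integral>\<^sup>+ w. F n w \<partial>Om) \<le> (\<Sum>n. e n * ennreal \<theta> ^ n * h s0)"
  proof (rule suminf_le)
    show "e n * (\<integral>\<^sup>+ w. F n w \<partial>Om) \<le> e n * ennreal \<theta> ^ n * h s0" for n
      using mult_left_mono[OF F_decay[of n], of "e n"] by (simp add: mult.assoc)
  qed auto
  also have "\<dots> = ennreal (1 / (sqrt \<theta> * (1 - sqrt \<theta>))) * h s0"
    by (simp add: geometric)
  finally show ?thesis by (simp add: \<epsilon>_def add_left_mono)
qed

lemma nn_integral_coupling_off_diagonal_le: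
  fixes \<pi> :: "('a::t2_space \<times> 'a) measure"
  assumes coupling: "is_coupling \<pi> \<mu> \<nu>"
    and V [measurable]: "V \<in> borel_measurable borel" and V_nonneg: "\<And>x. 0 \<le> V x"
    and "0 \<le> b"
  shows "(\<integral>\<^sup>+ z. indicator {(u, v). u \<noteq> v} z * ennreal (V (fst z) + V (snd z) + b) \<partial>\<pi>)
           \<le> (\<integral>\<^sup>+ z. ennreal (V z) \<partial>\<mu>) + (\<integral>\<^sup>+ z. ennreal (V z) \<partial>\<nu>)
              + ennreal (b * measure \<pi> {(u, v). u \<noteq> v})"
proof -
  let ?D = "{(u, v). u \<noteq> (v :: 'a)}"
  have prob: "prob_space \<pi>" and sets_\<pi>: "sets \<pi> = sets borel"
    and \<mu>: "\<mu> = distr \<pi> borel fst" and \<nu>: "\<nu> = distr \<pi> borel snd"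
    using coupling by (auto simp: is_coupling_def space_prob_algebra)
  have [measurable]: "fst \<in> \<pi> \<rightarrow>\<^sub>M borel" "snd \<in> \<pi> \<rightarrow>\<^sub>M borel"
    by (simp_all add: measurable_cong_sets[OF sets_\<pi> refl] borel_measurable_continuous_onI
        continuous_on_fst continuous_on_snd)
  have D: "?D \<in> sets \<pi>" by (simp add: sets_\<pi>)
  have "(\<integral>\<^sup>+ z. indicator ?D z * ennreal (V (fst z) + V (snd z) + b) \<partial>\<pi>)
      \<le> (\<integral>\<^sup>+ z. ennreal (V (fst z)) + ennreal (V (snd z)) + ennreal b * indicator ?D z \<partial>\<pi>)"
    using V_nonneg \<open>0 \<le> b\<close> by (intro nn_integral_mono) (auto simp: indicator_def)
  also have "\<dots> = (\<integral>\<^sup>+ z. ennreal (V z) \<partial>\<mu>) + (\<integral>\<^sup>+ z. ennreal (V z) \<partial>\<nu>) + ennreal b * emeasure \<pi> ?D"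
    using D by (simp add: \<mu> \<nu> nn_integral_add nn_integral_distr nn_integral_cmult_indicator)
  also have "ennreal b * emeasure \<pi> ?D = ennreal (b * measure \<pi> ?D)"
    using \<open>0 \<le> b\<close> prob_space.finite_measure[OF prob]
    by (simp add: finite_measure.emeasure_eq_measure ennreal_mult)
  finally show ?thesis .
qed

lemma drift_constants_exist:
  fixes a \<beta> c :: real
  assumes a: "0 < a" "a < 1" and \<beta>: "0 < \<beta>" and c: "c < 1"
  obtains b \<theta> where "0 < b" "0 < \<theta>" "\<theta> < 1"
    \<comment> \<open>\<open>W\<close> stands for \<open>V x + V y \<ge> 2\<close> and \<open>q\<close> for the probability of not coupling in one step\<close>
    "\<And>W q. 2 \<le> W \<Longrightarrow> q \<le> 1 \<Longrightarrow> a * W + b * q \<le> \<theta> * (W + b)"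
    "\<And>W q. 0 \<le> W \<Longrightarrow> q \<le> c \<Longrightarrow> \<beta> + b * q \<le> \<theta> * (W + b)"
proof
  define b where "b = 2 * \<beta> / (1 - c)"
  define \<theta> where "\<theta> = max ((1 + c) / 2) ((2 * a + b) / (2 + b))"
  show b: "0 < b" using \<beta> c by (simp add: b_def)
  have \<theta>_c: "(1 + c) / 2 \<le> \<theta>" by (simp add: \<theta>_def)
  have \<theta>_b': "(2 * a + b) / (2 + b) \<le> \<theta>" by (simp add: \<theta>_def)
  then have \<theta>_b: "2 * a + b \<le> \<theta> * (2 + b)" using b by (simp add: pos_divide_le_eq)
  have "a \<le> (2 * a + b) / (2 + b)" using a b by (simp add: pos_le_divide_eq algebra_simps)
  with \<theta>_b' have \<theta>_a: "a \<le> \<theta>" by linarith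
  show "0 < \<theta>" using \<theta>_a a by simp
  have "(2 * a + b) / (2 + b) < 1" using a b by (simp add: pos_divide_less_eq)
  then show "\<theta> < 1" using c by (simp add: \<theta>_def)
  show "a * W + b * q \<le> \<theta> * (W + b)" if "2 \<le> W" "q \<le> 1" for W q
  proof -
    have "0 \<le> (W - 2) * (\<theta> - a)" using that \<theta>_a by simp
    moreover have "b * q \<le> b" using that b by simp
    ultimately show ?thesis using \<theta>_b by (simp add: algebra_simps)
  qed
  show "\<beta> + b * q \<le> \<theta> * (W + b)" if "0 \<le> W" "q \<le> c" for W q
  proof -
    have "\<beta> + b * q \<le> \<beta> + b * c" using that b by simp
    also have "\<dots> = b * ((1 + c) / 2)" using c by (simp add: b_def field_simps)
    also have "\<dots> \<le> \<theta> * b" using \<theta>_c b by simp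
    also have "\<dots> \<le> \<theta> * (W + b)" using that \<theta>_a a by simp
    finally show ?thesis .
  qed
qed

lemma coupling_kernel_drift:
  fixes Q :: "'a::t2_space \<times> 'a \<Rightarrow> ('a \<times> 'a) measure" and \<mu> :: "'a \<Rightarrow> 'a measure"
    and small :: "'a \<Rightarrow> 'a \<Rightarrow> bool"
  assumes coupling: "\<And>x y. is_coupling (Q (x, y)) (\<mu> x) (\<mu> y)"
    and V: "V \<in> borel_measurable borel" "\<And>x. 1 \<le> V x"
    and a: "0 < a" "a < 1" and \<beta>: "0 < \<beta>" and c: "c < 1"
    and large_drift: "\<And>x y. \<not> small x y \<Longrightarrow>
       (\<integral>\<^sup>+ z. ennreal (V z) \<partial>\<mu> x) + (\<integral>\<^sup>+ z. ennreal (V z) \<partial>\<mu> y) \<le> ennreal (a * (V x + V y))"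
    and small_drift: "\<And>x y. small x y \<Longrightarrow>
       (\<integral>\<^sup>+ z. ennreal (V z) \<partial>\<mu> x) + (\<integral>\<^sup>+ z. ennreal (V z) \<partial>\<mu> y) \<le> ennreal \<beta>"
    and small_coupled: "\<And>x y. small x y \<Longrightarrow> measure (Q (x, y)) {(u, v). u \<noteq> v} \<le> c"
  obtains b \<theta> where "0 < b" "0 < \<theta>" "\<theta> < 1"
    "\<And>s. (\<integral>\<^sup>+ z. indicator {(u, v). u \<noteq> v} z * ennreal (V (fst z) + V (snd z) + b) \<partial>Q s)
           \<le> ennreal \<theta> * ennreal (V (fst s) + V (snd s) + b)"
proof -
  obtain b \<theta> where b: "0 < b" and \<theta>: "0 < \<theta>" "\<theta> < 1"
    and large: "\<And>W q. 2 \<le> W \<Longrightarrow> q \<le> 1 \<Longrightarrow> a * W + b * q \<le> \<theta> * (W + b)"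
    and small: "\<And>W q. 0 \<le> W \<Longrightarrow> q \<le> c \<Longrightarrow> \<beta> + b * q \<le> \<theta> * (W + b)"
    using drift_constants_exist[OF a \<beta> c] by blast
  have "(\<integral>\<^sup>+ z. indicator {(u, v). u \<noteq> v} z * ennreal (V (fst z) + V (snd z) + b) \<partial>Q (x, y))
        \<le> ennreal \<theta> * ennreal (V x + V y + b)" for x y
  proof -
    define q where "q = measure (Q (x, y)) {(u, v). u \<noteq> v}"
    have "prob_space (Q (x, y))"
      using coupling[of x y] by (simp add: is_coupling_def space_prob_algebra)
    then have q: "0 \<le> q" "q \<le> 1" by (simp_all add: q_def prob_space.prob_le_1)
    obtain A where A: "0 \<le> A" "A + b * q \<le> \<theta> * (V x + V y + b)"
      and A_drift: "(\<integral>\<^sup>+ z. ennreal (V z) \<partial>\<mu> x) + (\<integral>\<^sup>+ z. ennreal (V z) \<partial>\<mu> y) \<le> ennreal A"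
    proof (cases "small x y")
      case True
      show ?thesis
      proof (rule that)
        show "\<beta> + b * q \<le> \<theta> * (V x + V y + b)"
          using small_coupled[OF True] V(2)[of x] V(2)[of y] by (intro small) (simp_all add: q_def)
      qed (use \<beta> small_drift[OF True] in simp_all)
    next
      case False
      show ?thesis
      proof (rule that)
        show "a * (V x + V y) + b * q \<le> \<theta> * (V x + V y + b)"
          using q V(2)[of x] V(2)[of y] by (intro large) simp_all
        show "0 \<le> a * (V x + V y)"
          using a V(2)[of x] V(2)[of y] by simp
      qed (rule large_drift[OF False])
    qed
    have "(\<integral>\<^sup>+ z. indicator {(u, v). u \<noteq> v} z * ennreal (V (fst z) + V (snd z) + b) \<partial>Q (x, y))
        \<le> (\<integral>\<^sup>+ z. ennreal (V z) \<partial>\<mu> x) + (\<integral>\<^sup>+ z. ennreal (V z) \<partial>\<mu> y) + ennreal (b * q)"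
      unfolding q_def using V(1) order_trans[OF zero_le_one V(2)] b
      by (intro nn_integral_coupling_off_diagonal_le[OF coupling]) auto
    also have "\<dots> \<le> ennreal A + ennreal (b * q)"
      using A_drift by (rule add_right_mono)
    also have "\<dots> = ennreal (A + b * q)"
      using A b q by simp
    also have "\<dots> \<le> ennreal (\<theta> * (V x + V y + b))"
      using A(2) by (rule ennreal_leI)
    finally show ?thesis
      using \<theta> V(2)[of x] V(2)[of y] b by (simp add: ennreal_mult)
  qed
  then show ?thesis using that b \<theta> by auto
qed

lemma coupling_time_exp_moment:
  fixes Q :: "'a::t2_space \<times> 'a \<Rightarrow> ('a \<times> 'a) measure" and \<mu> :: "'a \<Rightarrow> 'a measure"
    and small :: "'a \<Rightarrow> 'a \<Rightarrow> bool"
  assumes Q: "Q \<in> borel \<rightarrow>\<^sub>M prob_algebra borel"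
    and coupling: "\<And>x y. is_coupling (Q (x, y)) (\<mu> x) (\<mu> y)"
    and V: "V \<in> borel_measurable borel" "\<And>x. 1 \<le> V x"
    and a: "0 < a" "a < 1" and \<beta>: "0 < \<beta>" and c: "c < 1"
    and large_drift: "\<And>x y. \<not> small x y \<Longrightarrow>
       (\<integral>\<^sup>+ z. ennreal (V z) \<partial>\<mu> x) + (\<integral>\<^sup>+ z. ennreal (V z) \<partial>\<mu> y) \<le> ennreal (a * (V x + V y))"
    and small_drift: "\<And>x y. small x y \<Longrightarrow>
       (\<integral>\<^sup>+ z. ennreal (V z) \<partial>\<mu> x) + (\<integral>\<^sup>+ z. ennreal (V z) \<partial>\<mu> y) \<le> ennreal \<beta>"
    and small_coupled: "\<And>x y. small x y \<Longrightarrow> measure (Q (x, y)) {(u, v). u \<noteq> v} \<le> c"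
  shows "\<exists>\<epsilon>>0. \<exists>C>0. \<forall>x y (Om :: 'w measure) S. markov_chain_from Om S borel Q (x, y) \<longrightarrow>
           (\<integral>\<^sup>+ w. exp_enat \<epsilon> (coupling_time (S w)) \<partial>Om) \<le> ennreal (C * (1 + V x + V y))"
proof -
  obtain b \<theta> where "0 < b" "0 < \<theta>" "\<theta> < 1"
    and drift: "\<And>s. (\<integral>\<^sup>+ z. indicator {(u, v). u \<noteq> v} z * ennreal (V (fst z) + V (snd z) + b) \<partial>Q s)
           \<le> ennreal \<theta> * ennreal (V (fst s) + V (snd s) + b)"
    using coupling_kernel_drift[OF coupling V a \<beta> c large_drift small_drift small_coupled] by blast
  define h where "h s = ennreal (V (fst s) + V (snd s) + b)" for s :: "'a \<times> 'a"
  define K where "K = 1 / (sqrt \<theta> * (1 - sqrt \<theta>))"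
  have "0 < K" using \<open>0 < \<theta>\<close> \<open>\<theta> < 1\<close> by (simp add: K_def)
  have bound: "(\<integral>\<^sup>+ w. exp_enat (- ln \<theta> / 2) (coupling_time (S w)) \<partial>Om)
      \<le> ennreal ((1 + K * (1 + b)) * (1 + V x + V y))"
    if mc: "markov_chain_from Om S borel Q (x, y)" for x y and Om :: "'w measure" and S
  proof -
    have W: "0 \<le> V x + V y" using V(2)[of x] V(2)[of y] by simp
    have "(\<integral>\<^sup>+ w. exp_enat (- ln \<theta> / 2) (coupling_time (S w)) \<partial>Om) \<le> 1 + ennreal K * h (x, y)"
      unfolding K_def
    proof (rule markov_chain_coupling_time_exp_moment[OF mc measurable_prob_algebraD[OF Q]])
      have [measurable]: "fst \<in> borel_measurable borel" "snd \<in> borel_measurable borel"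
        by (simp_all add: borel_measurable_continuous_onI continuous_on_fst continuous_on_snd)
      show "h \<in> borel_measurable borel" unfolding h_def using V(1) by measurable
      show "1 \<le> h s" for s
        using ennreal_leI[of 1 "V (fst s) + V (snd s) + b"] V(2)[of "fst s"] V(2)[of "snd s"] \<open>0 < b\<close>
        by (simp add: h_def del: ennreal_plus)
    qed (use \<open>0 < \<theta>\<close> \<open>\<theta> < 1\<close> drift in \<open>simp_all add: h_def\<close>)
    also have "\<dots> = ennreal (1 + K * (V x + V y + b))"
      using W \<open>0 < b\<close> \<open>0 < K\<close> by (simp add: h_def ennreal_mult)
    also have "\<dots> \<le> ennreal ((1 + K * (1 + b)) * (1 + V x + V y))"
      using W \<open>0 < b\<close> \<open>0 < K\<close> mult_nonneg_nonneg[of "K * b" "V x + V y"]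
      by (intro ennreal_leI) (simp add: algebra_simps)
    finally show ?thesis .
  qed
  moreover have "0 < - ln \<theta> / 2" using \<open>0 < \<theta>\<close> \<open>\<theta> < 1\<close> by simp
  moreover have "0 < 1 + K * (1 + b)" using \<open>0 < K\<close> \<open>0 < b\<close> by (simp add: add_pos_pos)
  ultimately show ?thesis by blast
qed

lemma time_grid_beyond:
  fixes t T0 :: real
  assumes "0 < t" "0 \<le> T0"
  shows "1 \<le> nat \<lfloor>(T0 + 1) / t + 1\<rfloor>" and "T0 < real (nat \<lfloor>(T0 + 1) / t + 1\<rfloor>) * t"
proof -
  have pos: "0 < (T0 + 1) / t" using assms by simp
  have above: "(T0 + 1) / t < real (nat \<lfloor>(T0 + 1) / t + 1\<rfloor>)" using pos by linarith
  then show "1 \<le> nat \<lfloor>(T0 + 1) / t + 1\<rfloor>" using pos by linarith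
  have "T0 + 1 < real (nat \<lfloor>(T0 + 1) / t + 1\<rfloor>) * t"
    using mult_strict_right_mono[OF above \<open>0 < t\<close>] \<open>0 < t\<close> by simp
  then show "T0 < real (nat \<lfloor>(T0 + 1) / t + 1\<rfloor>) * t" by simp
qed

theorem lemma3p6:
  fixes P :: "real \<Rightarrow> 'a::euclidean_space \<Rightarrow> 'a measure"
    and V :: "'a \<Rightarrow> real"
    and t_star alpha beta :: real
    and R_star alpha_star beta_star T0 :: real
    and Q :: "'a \<times> 'a \<Rightarrow> ('a \<times> 'a) measure"
  assumes kernel: "\<And>t. t \<ge> 0 \<Longrightarrow> P t \<in> borel \<rightarrow>\<^sub>M prob_algebra borel"
    and semigroup_0: "\<And>x. P 0 x = return borel x"
    and semigroup: "\<And>s t x. s \<ge> 0 \<Longrightarrow> t \<ge> 0 \<Longrightarrow> P (s + t) x = P s x \<bind> P t"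
    (* (LC) *)
    and V_meas: "V \<in> borel_measurable borel"
    and V_ge1: "\<And>x. V x \<ge> 1"
    and V_infty: "filterlim V at_top at_infinity"
    and t_star_pos: "t_star > 0"
    and alpha: "0 < alpha" "alpha < 1"
    and beta: "beta \<ge> 0"
    and LC: "\<And>x. (\<integral>\<^sup>+ z. ennreal (V z) \<partial>P t_star x) \<le> ennreal (alpha * V x + beta)"
    (* (H1) *)
    and H1: "\<forall>R>0. \<exists>R0>0. \<forall>\<delta>>0. \<exists>T0'. \<forall>t\<ge>T0'. \<forall>x y. norm x \<le> R \<longrightarrow> norm y \<le> R \<longrightarrow>
              (\<exists>\<pi>. is_coupling \<pi> (P t x) (P t y) \<and>
                 emeasure \<pi> {(x', y'). dist x' y' \<le> \<delta> \<and> norm x' \<le> R0 \<and> norm y' \<le> R0} > 0)"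
    (* (H2) *)
    and H2: "\<And>t x. t > 0 \<Longrightarrow>
              ((\<lambda>y. SUP f \<in> {f \<in> borel_measurable borel. \<forall>z. \<bar>f z\<bar> \<le> (1::real)}.
                   (\<integral>z. f z \<partial>P t x) - (\<integral>z. f z \<partial>P t y)) \<longlongrightarrow> 0) (at x)"
    (* V bounded on bounded sets *)
    and V_bdd: "\<And>B. bounded B \<Longrightarrow> bdd_above (V ` B)"
    (* choice of R_star *)
    and R_star_pos: "R_star > 0"
    and alpha_star: "0 < alpha_star" "alpha_star < 1"
    and beta_star: "beta_star > 0"
    and R_star: "\<And>k x y. k \<ge> 1 \<Longrightarrow>
        (sqrt ((norm x)\<^sup>2 + (norm y)\<^sup>2) \<ge> R_star \<longrightarrow>
          (\<integral>\<^sup>+ z. ennreal (V z) \<partial>P (real k * t_star) x) + (\<integral>\<^sup>+ z. ennreal (V z) \<partial>P (real k * t_star) y)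
            \<le> ennreal (alpha_star * (V x + V y))) \<and>
        (sqrt ((norm x)\<^sup>2 + (norm y)\<^sup>2) < R_star \<longrightarrow>
          (\<integral>\<^sup>+ z. ennreal (V z) \<partial>P (real k * t_star) x) + (\<integral>\<^sup>+ z. ennreal (V z) \<partial>P (real k * t_star) y)
            \<le> ennreal beta_star)"
    (* choice of T0 *)
    and T0_gt1: "T0 > 1"
    and T0: "\<And>t. t > T0 \<Longrightarrow> \<exists>c<1. \<forall>x y. norm x \<le> R_star \<longrightarrow> norm y \<le> R_star \<longrightarrow>
                 var_dist (P t x) (P t y) \<le> c"
    (* maximal coupling kernel for T = k0 * t_star, k0 = [(T0+1)/t_star + 1] *)
    and Q_meas: "Q \<in> borel \<rightarrow>\<^sub>M prob_algebra borel"
    and Q_coupling: "\<And>x y. is_coupling (Q (x, y))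
        (P (real (nat \<lfloor>(T0 + 1) / t_star + 1\<rfloor>) * t_star) x)
        (P (real (nat \<lfloor>(T0 + 1) / t_star + 1\<rfloor>) * t_star) y)"
    and Q_maximal: "\<And>x y. measure (Q (x, y)) {(u, v). u \<noteq> v} =
        var_dist (P (real (nat \<lfloor>(T0 + 1) / t_star + 1\<rfloor>) * t_star) x)
                 (P (real (nat \<lfloor>(T0 + 1) / t_star + 1\<rfloor>) * t_star) y)"
  shows "\<exists>\<epsilon>>0. \<exists>C>0. \<forall>x y. x \<noteq> y \<longrightarrow>
           (\<forall>(Om :: 'w measure) S. markov_chain_from Om S borel Q (x, y) \<longrightarrow>
              (\<integral>\<^sup>+ w. exp_enat \<epsilon> (coupling_time (S w)) \<partial>Om) \<le> ennreal (C * (1 + V x + V y)))"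
proof -
  define T where "T = real (nat \<lfloor>(T0 + 1) / t_star + 1\<rfloor>) * t_star"
  have "0 \<le> T0" using T0_gt1 by simp
  note grid = time_grid_beyond[OF t_star_pos this, folded T_def]
  obtain c where "c < 1"
    and c: "\<And>x y. norm x \<le> R_star \<Longrightarrow> norm y \<le> R_star \<Longrightarrow> var_dist (P T x) (P T y) \<le> c"
    using T0[OF grid(2)] by auto
  have "\<exists>\<epsilon>>0. \<exists>C>0. \<forall>x y (Om :: 'w measure) S. markov_chain_from Om S borel Q (x, y) \<longrightarrow>
           (\<integral>\<^sup>+ w. exp_enat \<epsilon> (coupling_time (S w)) \<partial>Om) \<le> ennreal (C * (1 + V x + V y))"
  proof (rule coupling_time_exp_moment[where \<mu> = "P T" and a = alpha_star and \<beta> = beta_star and c = c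
        and small = "\<lambda>x y. sqrt ((norm x)\<^sup>2 + (norm y)\<^sup>2) < R_star"])
    show "is_coupling (Q (x, y)) (P T x) (P T y)" for x y using Q_coupling by (simp add: T_def)
    show "measure (Q (x, y)) {(u, v). u \<noteq> v} \<le> c" if "sqrt ((norm x)\<^sup>2 + (norm y)\<^sup>2) < R_star" for x y
    proof -
      have "norm x \<le> sqrt ((norm x)\<^sup>2 + (norm y)\<^sup>2)" "norm y \<le> sqrt ((norm x)\<^sup>2 + (norm y)\<^sup>2)"
        by (simp_all add: real_le_rsqrt)
      then have "norm x \<le> R_star" "norm y \<le> R_star" using that by linarith+
      then show ?thesis using Q_maximal[of x y] c[of x y] by (simp add: T_def)
    qed
  qed (use Q_meas V_meas V_ge1 alpha_star beta_star \<open>c < 1\<close> R_star[OF grid(1)] in \<open>auto simp: T_def\<close>)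
  then show ?thesis by blast
qed

end
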